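(* Assume (H1) and (H2) from the context hold, let $c>c^*$, and let $\gamma\in(1,2)$ satisfy $\Phi(\gamma\Lambda_c)<c$ and $M_i(\gamma\Lambda_c)>0$ for $i=1,\dots,N$. Then for each $i=1,\dots,N$, $$\frac{M_i(\Lambda_c)}{(\lambda_{1i}+\Lambda_c)\nu^i_{\Lambda_c}}+\frac{M_i(\Lambda_c)}{(\lambda_{2i}-\Lambda_c)\nu^i_{\Lambda_c}}-\frac{M_i(\gamma\Lambda_c)}{(\lambda_{1i}+\gamma\Lambda_c)\nu^i_{\gamma\Lambda_c}}-\frac{M_i(\gamma\Lambda_c)}{(\lambda_{2i}-\gamma\Lambda_c)\nu^i_{\gamma\Lambda_c}}>0.$$
   Context: Let $N\ge1$ and $D=\mathrm{diag}(d_1,\dots,d_N)$ with $d_i>0$. Vector inequalities are componentwise; $u\gg0$ means all components positive; $[0,r]=\{u:0\le u\le r\}$. (H1) - $k^+\gg0$; $f:[0,k^+]\to\mathbb{R}^N$ is continuous and piecewise twice continuously differentiable; solutions of $u_t=Du_{xx}+f(u)$ with data continuous in $[0,k^+]$ exist globally and stay in $[0,k^+]$. - $0\ll k^-\le k\le k^+$; continuous piecewise $C^2$ maps $f^\pm:[0,k^\pm]\to\mathbb{R}^N$ satisfy $f^-\le f\le f^+$ on $[0,k^+]$. - $f(0)=f(k)=0$, $f^\pm(0)=f^\pm(k^\pm)=0$, with no other positive equilibria between $0$ and $k$, respectively $k^\pm$. - $f^\pm$ are cooperative on $[0,k^\pm]$ and share with $f$ the Jacobian $f'(0)$ at $0$.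 (H2) - $A_\lambda=(a^{ij}_\lambda)=\mathrm{diag}(d_i\lambda^2)+f'(0)$ is block lower triangular for $\lambda>0$, with irreducible or $1\times1$ zero diagonal blocks. - Its first block has positive principal eigenvalue $\Psi(A_\lambda)$ (where $\Psi(A)=\rho(A+\alpha I)-\alpha$, $A+\alpha I\ge0$), strictly larger than those of the other blocks. - An eigenvector $\nu_\lambda=(\nu^i_\lambda)\gg0$ for $\Psi(A_\lambda)$ exists and is continuous in $\lambda$. Speeds. $\Phi(\lambda)=\Psi(A_\lambda)/\lambda$ and $c^*=\inf_{\lambda>0}\Phi$. For $c>c^*$, $\Lambda_c$ is the smallest positive solution of $\Phi(\lambda)=c$. Constants. $\beta>\max\{|\partial_if_j(u)|:u\in[0,k^+]\}$ is a fixed, sufficiently large constant. Set $\lambda_{1i}=\frac{-c+\sqrt{c^2+4\beta d_i}}{2d_i}$ and $\lambda_{2i}=\frac{c+\sqrt{c^2+4\beta d_i}}{2d_i}$, with $\lambda_{2i}>\lambda_{1i}>2\Lambda_c$. The quantity $M_i$. $M_i(\lambda)=\beta\nu^i_\lambda-\nu^i_\lambda d_i\lambda^2+\sum_{j=1}^N\nu^j_\lambda a^{ij}_\lambda$. *)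

theory Defs
  imports Complex_Main "Jordan_Normal_Form.Spectral_Radius"
begin

(* Indices run over 0..<N (the paper uses 1..N). Vectors are JNF vectors of
   dimension N, matrices are JNF N x N real matrices. *)

definition order_box :: "nat \<Rightarrow> real vec \<Rightarrow> real vec set" where
  "order_box N r = {u. dim_vec u = N \<and> (\<forall>i<N. 0 \<le> u $ i \<and> u $ i \<le> r $ i)}"

definition partial_deriv_within ::
  "nat \<Rightarrow> (real vec \<Rightarrow> real vec) \<Rightarrow> real vec set \<Rightarrow> real vec \<Rightarrow> nat \<Rightarrow> nat \<Rightarrow> real \<Rightarrow> bool" where
  "partial_deriv_within N g S u i j D \<longleftrightarrow>
     ((\<lambda>t. g (u + t \<cdot>\<^sub>v unit_vec N j) $ i) has_real_derivative D)
       (at 0 within {t. u + t \<cdot>\<^sub>v unit_vec N j \<in> S})"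

definition cooperative_on :: "nat \<Rightarrow> (real vec \<Rightarrow> real vec) \<Rightarrow> real vec set \<Rightarrow> bool" where
  "cooperative_on N g S \<longleftrightarrow>
     (\<forall>u\<in>S. \<forall>i<N. \<forall>j<N. \<forall>D. i \<noteq> j \<longrightarrow> partial_deriv_within N g S u i j D \<longrightarrow> 0 \<le> D)"

definition jacobian_at_0 :: "nat \<Rightarrow> (real vec \<Rightarrow> real vec) \<Rightarrow> real vec set \<Rightarrow> real mat \<Rightarrow> bool" where
  "jacobian_at_0 N g S J \<longleftrightarrow> J \<in> carrier_mat N N \<and>
     (\<forall>i<N. \<forall>j<N. partial_deriv_within N g S (0\<^sub>v N) i j (J $$ (i,j)))"

definition vle :: "nat \<Rightarrow> real vec \<Rightarrow> real vec \<Rightarrow> bool" where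
  "vle N u v \<longleftrightarrow> (\<forall>i<N. u $ i \<le> v $ i)"

definition vpos :: "nat \<Rightarrow> real vec \<Rightarrow> bool" where
  "vpos N u \<longleftrightarrow> dim_vec u = N \<and> (\<forall>i<N. 0 < u $ i)"

definition A_mat :: "nat \<Rightarrow> (nat \<Rightarrow> real) \<Rightarrow> real mat \<Rightarrow> real \<Rightarrow> real mat" where
  "A_mat N d J l = mat N N (\<lambda>(i,j). (if i = j then d i * l\<^sup>2 else 0) + J $$ (i,j))"

definition Psi :: "real mat \<Rightarrow> real" where
  "Psi A = (let n = dim_row A;
               \<alpha> = (SOME \<alpha>::real. \<forall>i<n. \<forall>j<n. 0 \<le> (A + \<alpha> \<cdot>\<^sub>m 1\<^sub>m n) $$ (i,j))
            in spectral_radius (map_mat complex_of_real (A + \<alpha> \<cdot>\<^sub>m 1\<^sub>m n)) - \<alpha>)"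

definition diag_block :: "real mat \<Rightarrow> nat \<Rightarrow> nat \<Rightarrow> real mat" where
  "diag_block A lo hi = mat (hi - lo) (hi - lo) (\<lambda>(i,j). A $$ (lo + i, lo + j))"

definition irreducible_mat :: "real mat \<Rightarrow> bool" where
  "irreducible_mat A \<longleftrightarrow> (let n = dim_row A in
     \<not> (\<exists>S. S \<noteq> {} \<and> S \<subset> {..<n} \<and> (\<forall>i\<in>S. \<forall>j\<in>{..<n} - S. A $$ (i,j) = 0)))"

definition block_lower_tri :: "real mat \<Rightarrow> nat \<Rightarrow> (nat \<Rightarrow> nat) \<Rightarrow> bool" where
  "block_lower_tri A m b \<longleftrightarrow>
     (\<forall>k<m. \<forall>l<m. k < l \<longrightarrow> (\<forall>i j. b k \<le> i \<and> i < b (Suc k) \<and> b l \<le> j \<and> j < b (Suc l)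
        \<longrightarrow> A $$ (i,j) = 0))"

definition Phi :: "nat \<Rightarrow> (nat \<Rightarrow> real) \<Rightarrow> real mat \<Rightarrow> real \<Rightarrow> real" where
  "Phi N d J l = Psi (A_mat N d J l) / l"

definition c_star :: "nat \<Rightarrow> (nat \<Rightarrow> real) \<Rightarrow> real mat \<Rightarrow> real" where
  "c_star N d J = (INF l\<in>{0<..}. Phi N d J l)"

definition M_fun :: "nat \<Rightarrow> (nat \<Rightarrow> real) \<Rightarrow> real mat \<Rightarrow> (real \<Rightarrow> real vec) \<Rightarrow> real \<Rightarrow> nat \<Rightarrow> real \<Rightarrow> real" where
  "M_fun N d J \<nu> \<beta> i l = \<beta> * (\<nu> l $ i) - (\<nu> l $ i) * d i * l\<^sup>2
      + (\<Sum>j<N. (\<nu> l $ j) * (A_mat N d J l $$ (i,j)))"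

definition lam1 :: "(nat \<Rightarrow> real) \<Rightarrow> real \<Rightarrow> real \<Rightarrow> nat \<Rightarrow> real" where
  "lam1 d \<beta> c i = (- c + sqrt (c\<^sup>2 + 4 * \<beta> * d i)) / (2 * d i)"

definition lam2 :: "(nat \<Rightarrow> real) \<Rightarrow> real \<Rightarrow> real \<Rightarrow> nat \<Rightarrow> real" where
  "lam2 d \<beta> c i = (c + sqrt (c\<^sup>2 + 4 * \<beta> * d i)) / (2 * d i)"

end

theory Submission
  imports Defs
begin

text \<open>For an eigenvector \<nu>_l, M_i(l)/\<nu>^i_l = \<beta> - d_i l^2 + l\<Phi>(l), and
  \<beta> + cx - d_i x^2 = d_i(\<lambda>_2 - x)(\<lambda>_1 + x). At \<Lambda>, where \<Phi>(\<Lambda>) = c, the first two terms therefore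
  sum to d_i(\<lambda>_1 + \<lambda>_2). At x = \<gamma>\<Lambda> the condition \<Phi>(x) < c makes M_i(x)/\<nu>^i_x strictly
  smaller than d_i(\<lambda>_2 - x)(\<lambda>_1 + x), so the last two terms sum to strictly less than
  d_i(\<lambda>_1 + \<lambda>_2).\<close>

lemma M_fun_eigenvector:
  assumes "0 < l" "i < N" "vpos N (\<nu> l)"
    and "A_mat N d J l *\<^sub>v \<nu> l = Psi (A_mat N d J l) \<cdot>\<^sub>v \<nu> l"
  shows "M_fun N d J \<nu> \<beta> i l = \<nu> l $ i * (\<beta> - d i * l\<^sup>2 + l * Phi N d J l)"
proof -
  have dim: "dim_vec (\<nu> l) = N" using assms(3) by (simp add: vpos_def)
  have "(\<Sum>j<N. \<nu> l $ j * A_mat N d J l $$ (i,j)) = (A_mat N d J l *\<^sub>v \<nu> l) $ i"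
    using assms(2) dim unfolding A_mat_def
    by (auto simp: mult_mat_vec_def scalar_prod_def atLeast0LessThan mult.commute intro!: sum.cong)
  also have "\<dots> = l * Phi N d J l * \<nu> l $ i"
    using assms by (simp add: dim Phi_def)
  finally show ?thesis unfolding M_fun_def by (simp add: algebra_simps)
qed

lemma lam_discriminant_nonneg:
  assumes "0 < d i" "0 < lam1 d \<beta> c i" "lam1 d \<beta> c i < lam2 d \<beta> c i"
  shows "0 \<le> c\<^sup>2 + 4 * \<beta> * d i"
proof (rule ccontr)
  assume "\<not> ?thesis"
  then have "sqrt (c\<^sup>2 + 4 * \<beta> * d i) < 0" by simp
  moreover have "0 < c"
    using assms(1,3) by (simp add: lam1_def lam2_def divide_less_cancel)
  moreover have "c < sqrt (c\<^sup>2 + 4 * \<beta> * d i)"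
    using assms(1,2) by (simp add: lam1_def field_simps)
  ultimately show False by linarith
qed

lemma lam_factorization:
  assumes "0 < d i" "0 \<le> c\<^sup>2 + 4 * \<beta> * d i"
  shows "\<beta> + c * x - d i * x\<^sup>2 = d i * (lam2 d \<beta> c i - x) * (lam1 d \<beta> c i + x)"
proof -
  define s where "s = sqrt (c\<^sup>2 + 4 * \<beta> * d i)"
  have s2: "s * s = c\<^sup>2 + 4 * \<beta> * d i" using assms(2) by (simp add: s_def)
  have "4 * d i * (d i * (lam2 d \<beta> c i - x) * (lam1 d \<beta> c i + x))
        = (s + c - 2 * d i * x) * (s - c + 2 * d i * x)"
    using assms(1) by (simp add: lam1_def lam2_def s_def field_simps)
  also have "\<dots> = 4 * d i * (\<beta> + c * x - d i * x\<^sup>2)"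
    by (simp add: s2 algebra_simps power2_eq_square)
  finally show ?thesis using assms(1) by simp
qed

lemma reciprocal_sum_of_product:
  fixes a b y dd :: real
  assumes "0 < a + y" "0 < b - y"
  shows "dd * (b - y) * (a + y) / (a + y) + dd * (b - y) * (a + y) / (b - y) = dd * (a + b)"
  using assms by simp (simp add: algebra_simps)

lemma reciprocal_sum_less:
  fixes a b x h dd :: real
  assumes "0 < a + x" "0 < b - x" "h < dd * (b - x) * (a + x)"
  shows "h / (a + x) + h / (b - x) < dd * (a + b)"
proof -
  have "h / (a + x) + h / (b - x) = h * ((a + x) + (b - x)) / ((a + x) * (b - x))"
    using assms(1,2) by (simp add: field_simps)
  also have "\<dots> < dd * (b - x) * (a + x) * ((a + x) + (b - x)) / ((a + x) * (b - x))"
    using assms by (intro divide_strict_right_mono mult_strict_right_mono) auto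
  also have "\<dots> = dd * (a + b)" using assms(1,2) by simp
  finally show ?thesis .
qed

lemma lam_quotient_gap:
  assumes "0 < d i" "0 < y" "y < x" "x < lam1 d \<beta> c i" "lam1 d \<beta> c i < lam2 d \<beta> c i"
    and "h < \<beta> + c * x - d i * x\<^sup>2"
  shows "(\<beta> + c * y - d i * y\<^sup>2) / (lam1 d \<beta> c i + y) + (\<beta> + c * y - d i * y\<^sup>2) / (lam2 d \<beta> c i - y)
    - h / (lam1 d \<beta> c i + x) - h / (lam2 d \<beta> c i - x) > 0"
proof -
  define l1 l2 where "l1 = lam1 d \<beta> c i" and "l2 = lam2 d \<beta> c i"
  have "0 \<le> c\<^sup>2 + 4 * \<beta> * d i"
    using lam_discriminant_nonneg[of d i] assms(1-5) by (simp add: l1_def l2_def)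
  then have factor: "\<beta> + c * z - d i * z\<^sup>2 = d i * (l2 - z) * (l1 + z)" for z
    using lam_factorization[of d i] assms(1) by (simp add: l1_def l2_def)
  have "h / (l1 + x) + h / (l2 - x) < d i * (l1 + l2)"
    using reciprocal_sum_less assms factor[of x] by (simp add: l1_def l2_def)
  also have "\<dots> = (\<beta> + c * y - d i * y\<^sup>2) / (l1 + y) + (\<beta> + c * y - d i * y\<^sup>2) / (l2 - y)"
    using reciprocal_sum_of_product[of l1 y l2 "d i"] assms(2-5)
    unfolding factor by (simp add: l1_def l2_def)
  finally show ?thesis by (simp add: l1_def l2_def)
qed

theorem lemma6p2:
  fixes N :: nat and d :: "nat \<Rightarrow> real"
    and f fp fm :: "real vec \<Rightarrow> real vec"
    and kp km k :: "real vec" and J :: "real mat"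
    and m :: nat and b :: "nat \<Rightarrow> nat"
    and \<nu> :: "real \<Rightarrow> real vec"
    and \<beta> c \<Lambda> \<gamma> :: real
  assumes N: "N \<ge> 1"
    and d_pos: "\<forall>i<N. 0 < d i"
    \<comment> \<open>(H1)\<close>
    and kp_pos: "vpos N kp"
    and km_pos: "vpos N km"
    and k_dim: "dim_vec k = N"
    and k_order: "vle N km k" "vle N k kp"
    and f_dim: "\<forall>u \<in> order_box N kp. dim_vec (f u) = N"
    and fm_dim: "\<forall>u \<in> order_box N km. dim_vec (fm u) = N"
    and fp_dim: "\<forall>u \<in> order_box N kp. dim_vec (fp u) = N"
    and f_inv: "\<forall>u \<in> order_box N kp. vle N (fm u) (f u) \<and> vle N (f u) (fp u)"
    and f_eq: "f (0\<^sub>v N) = 0\<^sub>v N" "f k = 0\<^sub>v N"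
    and fp_eq: "fp (0\<^sub>v N) = 0\<^sub>v N" "fp kp = 0\<^sub>v N"
    and fm_eq: "fm (0\<^sub>v N) = 0\<^sub>v N" "fm km = 0\<^sub>v N"
    and f_noeq: "\<forall>u \<in> order_box N k. vpos N u \<and> f u = 0\<^sub>v N \<longrightarrow> u = k"
    and fp_noeq: "\<forall>u \<in> order_box N kp. vpos N u \<and> fp u = 0\<^sub>v N \<longrightarrow> u = kp"
    and fm_noeq: "\<forall>u \<in> order_box N km. vpos N u \<and> fm u = 0\<^sub>v N \<longrightarrow> u = km"
    and fp_coop: "cooperative_on N fp (order_box N kp)"
    and fm_coop: "cooperative_on N fm (order_box N km)"
    and f_jac: "jacobian_at_0 N f (order_box N kp) J"
    and fp_jac: "jacobian_at_0 N fp (order_box N kp) J"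
    and fm_jac: "jacobian_at_0 N fm (order_box N km) J"
    \<comment> \<open>(H2)\<close>
    and blocks: "1 \<le> m" "b 0 = 0" "b m = N" "\<forall>q<m. b q < b (Suc q)"
    and lower_tri: "\<forall>l>0. block_lower_tri (A_mat N d J l) m b"
    and irred: "\<forall>l>0. \<forall>q<m. irreducible_mat (diag_block (A_mat N d J l) (b q) (b (Suc q)))
                  \<or> (b (Suc q) = Suc (b q) \<and> A_mat N d J l $$ (b q, b q) = 0)"
    and first_pos: "\<forall>l>0. 0 < Psi (diag_block (A_mat N d J l) (b 0) (b 1))"
    and first_dom: "\<forall>l>0. \<forall>q. 1 \<le> q \<and> q < m \<longrightarrow>
                  Psi (diag_block (A_mat N d J l) (b q) (b (Suc q)))
                    < Psi (diag_block (A_mat N d J l) (b 0) (b 1))"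
    and nu_pos: "\<forall>l>0. vpos N (\<nu> l)"
    and nu_eig: "\<forall>l>0. A_mat N d J l *\<^sub>v \<nu> l = Psi (A_mat N d J l) \<cdot>\<^sub>v \<nu> l"
    and nu_cont: "\<forall>i<N. continuous_on {0<..} (\<lambda>l. \<nu> l $ i)"
    \<comment> \<open>constants\<close>
    and beta_bound: "\<forall>u \<in> order_box N kp. \<forall>i<N. \<forall>j<N. \<forall>D.
                  partial_deriv_within N f (order_box N kp) u i j D \<longrightarrow> \<bar>D\<bar> < \<beta>"
    and c_gt: "c > c_star N d J"
    and Lam: "0 < \<Lambda>" "Phi N d J \<Lambda> = c" "\<forall>l>0. Phi N d J l = c \<longrightarrow> \<Lambda> \<le> l"
    and lam_order: "\<forall>i<N. lam2 d \<beta> c i > lam1 d \<beta> c i \<and> lam1 d \<beta> c i > 2 * \<Lambda>"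
    and gamma: "1 < \<gamma>" "\<gamma> < 2"
    and gamma_Phi: "Phi N d J (\<gamma> * \<Lambda>) < c"
    and gamma_M: "\<forall>i<N. M_fun N d J \<nu> \<beta> i (\<gamma> * \<Lambda>) > 0"
  shows "\<forall>i<N.
    M_fun N d J \<nu> \<beta> i \<Lambda> / ((lam1 d \<beta> c i + \<Lambda>) * (\<nu> \<Lambda> $ i))
    + M_fun N d J \<nu> \<beta> i \<Lambda> / ((lam2 d \<beta> c i - \<Lambda>) * (\<nu> \<Lambda> $ i))
    - M_fun N d J \<nu> \<beta> i (\<gamma> * \<Lambda>) / ((lam1 d \<beta> c i + \<gamma> * \<Lambda>) * (\<nu> (\<gamma> * \<Lambda>) $ i))
    - M_fun N d J \<nu> \<beta> i (\<gamma> * \<Lambda>) / ((lam2 d \<beta> c i - \<gamma> * \<Lambda>) * (\<nu> (\<gamma> * \<Lambda>) $ i)) > 0"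
proof (intro allI impI)
  fix i assume i: "i < N"
  define x where "x = \<gamma> * \<Lambda>"
  have "\<Lambda> < x" "x < 2 * \<Lambda>" using gamma Lam(1) by (simp_all add: x_def)
  then have x: "0 < x" "\<Lambda> < x" "x < lam1 d \<beta> c i" "lam1 d \<beta> c i < lam2 d \<beta> c i"
    using lam_order i Lam(1) by (meson less_trans)+
  have eigen: "vpos N (\<nu> l)" "A_mat N d J l *\<^sub>v \<nu> l = Psi (A_mat N d J l) \<cdot>\<^sub>v \<nu> l"
    if "0 < l" for l using nu_pos nu_eig that by blast+
  have nu_i: "0 < \<nu> l $ i" if "0 < l" for l using eigen(1)[OF that] i by (simp add: vpos_def)
  note M_eigen = M_fun_eigenvector[where \<nu> = \<nu> and d = d and \<beta> = \<beta>, OF _ i eigen]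
  define h where "h = \<beta> - d i * x\<^sup>2 + x * Phi N d J x"
  have M_Lam: "M_fun N d J \<nu> \<beta> i \<Lambda> = \<nu> \<Lambda> $ i * (\<beta> + c * \<Lambda> - d i * \<Lambda>\<^sup>2)"
    using M_eigen[OF Lam(1) Lam(1) Lam(1)] Lam(2) by (simp add: algebra_simps)
  have M_x: "M_fun N d J \<nu> \<beta> i x = \<nu> x $ i * h"
    using M_eigen[OF x(1) x(1) x(1)] by (simp add: h_def)
  have "x * Phi N d J x < x * c"
    using gamma_Phi x(1) unfolding x_def by (rule mult_strict_left_mono)
  then have "h < \<beta> + c * x - d i * x\<^sup>2" unfolding h_def by (simp add: mult.commute)
  from lam_quotient_gap[OF _ Lam(1) x(2-4) this] d_pos i
  show "M_fun N d J \<nu> \<beta> i \<Lambda> / ((lam1 d \<beta> c i + \<Lambda>) * (\<nu> \<Lambda> $ i))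
    + M_fun N d J \<nu> \<beta> i \<Lambda> / ((lam2 d \<beta> c i - \<Lambda>) * (\<nu> \<Lambda> $ i))
    - M_fun N d J \<nu> \<beta> i (\<gamma> * \<Lambda>) / ((lam1 d \<beta> c i + \<gamma> * \<Lambda>) * (\<nu> (\<gamma> * \<Lambda>) $ i))
    - M_fun N d J \<nu> \<beta> i (\<gamma> * \<Lambda>) / ((lam2 d \<beta> c i - \<gamma> * \<Lambda>) * (\<nu> (\<gamma> * \<Lambda>) $ i)) > 0"
    using nu_i[OF Lam(1)] nu_i[OF x(1)] unfolding x_def[symmetric] M_Lam M_x by simp
qed

end
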